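(* Let $m,n$ be integers with $1<m<n-1$. Then there exist infinitely many $x\in\mathrm{Gr}(m,n)(\mathbb{Q})$ with $\ell(x)=0$.
   Context: For integers $1\le m\le n-1$, rational points $x\in\mathrm{Gr}(m,n)(\mathbb{Q})$ (the $m$-dimensional linear subspaces $W\subset\mathbb{Q}^n$) are identified with primitive lattices $\Lambda=W\cap\mathbb{Z}^n$ of rank $m$; a sublattice $\Lambda\subset\mathbb{Z}^n$ is primitive if $\Lambda_{\mathbb{R}}\cap\mathbb{Z}^n=\Lambda$, where $\Lambda_{\mathbb{R}}$ denotes the real span of $\Lambda$. All lattices live in Euclidean spaces, and $\mathrm{covol}(L)=\sqrt{\det(\langle b_i,b_j\rangle)_{i,j}}$ for any basis $(b_i)$ of $L$. The anticanonical height is $H(x)=\mathrm{covol}(\Lambda)^n$ and $h(x)=\log H(x)$. The dual lattice is $\Lambda^*=\{y\in\Lambda_{\mathbb{R}}:\langle y,z\rangle\in\mathbb{Z}\ \forall z\in\Lambda\}$; the factor lattice $\Lambda^\pi$ is the image of $\mathbb{Z}^n$ under the orthogonal projection $\mathbb{R}^n\to\Lambda_{\mathbb{R}}^\perp$. The tangent lattice is $T_\Lambda=\Lambda^*\otimes_{\mathbb{Z}}\Lambda^\pi$, a lattice of rank $m(n-m)$ in $\mathbb{R}^n\otimes\mathbb{R}^n$ with inner product $\langle a\otimes b,c\otimes d\rangle=\langle a,c\rangle\langle b,d\rangle$. For a lattice $L$ of rank $r$, its slope is $\mu(L)=-\frac1r\log\mathrm{covol}(L)$; the maximal slope $\mu_{\max}(L)$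 is the maximum of $\mu(M)$ over nonzero sublattices $M\subseteq L$; the minimal slope $\mu_{\min}(L)$ is the minimum of $\mu(L/M)$ over primitive sublattices $M\subsetneq L$, where $L/M$ is identified with the orthogonal projection of $L$ onto $M_{\mathbb{R}}^\perp\cap L_{\mathbb{R}}$. The freeness of $x$ (with $H(x)>1$) is $\ell(x)=\max\{m(n-m)\mu_{\min}(T_\Lambda),0\}/h(x)\in[0,1]$. *)

theory Defs
  imports "HOL-Analysis.Analysis"
begin

definition int_span :: "'a::real_vector set \<Rightarrow> 'a set" where
  "int_span S = {x. \<exists>F c. finite F \<and> F \<subseteq> S \<and> x = (\<Sum>v\<in>F. of_int (c v) *\<^sub>R v)}"

definition lattice_basis :: "'a::euclidean_space set \<Rightarrow> 'a list \<Rightarrow> bool" where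
  "lattice_basis L bs \<longleftrightarrow> distinct bs \<and> independent (set bs) \<and> L = int_span (set bs)"

definition gram_det :: "'a::euclidean_space list \<Rightarrow> real" where
  "gram_det bs = (\<Sum>p\<in>{p. p permutes {..<length bs}}.
      of_int (sign p) * (\<Prod>i<length bs. (bs ! i) \<bullet> (bs ! (p i))))"

definition covol :: "'a::euclidean_space set \<Rightarrow> real" where
  "covol L = sqrt (gram_det (SOME bs. lattice_basis L bs))"

definition lattice_rank :: "'a::euclidean_space set \<Rightarrow> nat" where
  "lattice_rank L = dim (span L)"

definition slope :: "'a::euclidean_space set \<Rightarrow> real" where
  "slope L = - (1 / real (lattice_rank L)) * ln (covol L)"

definition perp_proj :: "'a::euclidean_space set \<Rightarrow> 'a \<Rightarrow> 'a" where
  "perp_proj V x = (THE y. x - y \<in> V \<and> (\<forall>v\<in>V. v \<bullet> y = 0))"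

definition primitive_sublattice :: "'a::euclidean_space set \<Rightarrow> 'a set \<Rightarrow> bool" where
  "primitive_sublattice M L \<longleftrightarrow> M \<subseteq> L \<and> span M \<inter> L = M"

text \<open>L/M: orthogonal projection of L onto (span M)^perp (inside span L).\<close>
definition lattice_quot :: "'a::euclidean_space set \<Rightarrow> 'a set \<Rightarrow> 'a set" where
  "lattice_quot L M = perp_proj (span M) ` L"

text \<open>Minimal slope (the minimum is attained; we write it as an infimum).\<close>
definition min_slope :: "'a::euclidean_space set \<Rightarrow> real" where
  "min_slope L = Inf {slope (lattice_quot L M) | M. primitive_sublattice M L \<and> M \<noteq> L}"

definition dual_lattice :: "'a::euclidean_space set \<Rightarrow> 'a set" where
  "dual_lattice L = {y \<in> span L. \<forall>z\<in>L. y \<bullet> z \<in> \<int>}"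

definition int_points :: "(real^'n) set" where
  "int_points = {x. \<forall>i. x $ i \<in> \<int>}"

text \<open>Rational points of Gr(m,n), n = CARD('n), identified with primitive lattices of rank m.\<close>
definition grass_points :: "nat \<Rightarrow> (real^'n) set set" where
  "grass_points m = {\<Lambda>. \<Lambda> \<subseteq> int_points \<and> \<Lambda> = span \<Lambda> \<inter> int_points \<and> dim (span \<Lambda>) = m}"

definition factor_lattice :: "(real^'n) set \<Rightarrow> (real^'n) set" where
  "factor_lattice \<Lambda> = perp_proj (span \<Lambda>) ` int_points"

text \<open>R^n tensor R^n realised as real^('n \<times> 'n), with (a \<otimes> b)(i,j) = a_i b_j;
  its standard inner product satisfies <a\<otimes>b, c\<otimes>d> = <a,c><b,d>.\<close>
definition tensor_vec :: "real^'n \<Rightarrow> real^'n \<Rightarrow> real^('n \<times> 'n)" where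
  "tensor_vec a b = (\<chi> p. a $ fst p * b $ snd p)"

definition tangent_lattice :: "(real^'n) set \<Rightarrow> (real^('n \<times> 'n)) set" where
  "tangent_lattice \<Lambda> =
     int_span {tensor_vec a b | a b. a \<in> dual_lattice \<Lambda> \<and> b \<in> factor_lattice \<Lambda>}"

definition height :: "(real^'n) set \<Rightarrow> real" where
  "height \<Lambda> = covol \<Lambda> ^ CARD('n)"

definition log_height :: "(real^'n) set \<Rightarrow> real" where
  "log_height \<Lambda> = ln (height \<Lambda>)"

text \<open>Freeness ell(x) (meaningful when H(x) > 1).\<close>
definition freeness :: "(real^'n) set \<Rightarrow> real" where
  "freeness \<Lambda> =
     (let m = dim (span \<Lambda>) in
      max (real (m * (CARD('n) - m)) * min_slope (tangent_lattice \<Lambda>)) 0 / log_height \<Lambda>)"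

end

theory Submission
  imports Defs "Jordan_Normal_Form.Determinant"
begin

text \<open>
  Let \<open>\<Lambda>\<^sub>k\<close> (\<open>k \<ge> 1\<close>) be the primitive lattice spanned by the unit vectors \<open>e\<^sub>i\<close>, \<open>i \<in> I\<close>,
  \<open>|I| = m - 1\<close>, and by \<open>w = e\<^sub>a + k e\<^sub>b\<close>. Its covolume is \<open>sqrt (1 + k\<^sup>2) > 1\<close>, and different \<open>k\<close>
  give different lattices. Pick \<open>i\<^sub>0 \<in> I\<close> (possible as \<open>m > 1\<close>) and a coordinate \<open>j\<^sub>0 \<notin> I \<union> {a, b}\<close>
  (possible as \<open>m < n - 1\<close>). Then \<open>e\<^sub>i\<^sub>0\<close> lies in \<open>\<Lambda>\<^sup>*\<close> and \<open>e\<^sub>j\<^sub>0\<close> in \<open>\<Lambda>\<^sup>\<pi>\<close>, so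
  \<open>u = e\<^sub>i\<^sub>0 \<otimes> e\<^sub>j\<^sub>0\<close> is a unit vector of \<open>T\<^sub>\<Lambda>\<close>, and \<open>\<langle>t, u\<rangle>\<close> is an integer for every
  \<open>t \<in> T\<^sub>\<Lambda>\<close>. Projecting \<open>T\<^sub>\<Lambda>\<close> onto \<open>\<real> u\<close> therefore yields the rank-one quotient \<open>\<int> u\<close> of
  covolume 1, whence \<open>\<mu>\<^sub>m\<^sub>i\<^sub>n(T\<^sub>\<Lambda>) \<le> 0\<close> and the freeness vanishes.

  Since the minimal slope is an infimum of reals, one also needs the slopes of all quotients to
  be bounded below: \<open>T\<^sub>\<Lambda>\<close> has bounded denominators, so it and its quotients are lattices, and
  it is spanned by vectors of norm at most \<open>1 + k\<^sup>2\<close>, so by Hadamard's inequality every quotient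
  has slope at least \<open>- ln (1 + k\<^sup>2)\<close>.
\<close>

interpretation Z: Modules.module "\<lambda>(k::int) (x::'a::real_vector). of_int k *\<^sub>R x"
  by standard (auto simp: scaleR_add_right scaleR_add_left)

lemma int_span_eq_Z_span: "int_span S = Z.span S"
  unfolding int_span_def Z.span_explicit by auto

lemma Z_subspace_iff:
  "Z.subspace G \<longleftrightarrow>
     0 \<in> G \<and> (\<forall>x\<in>G. \<forall>y\<in>G. x + y \<in> G) \<and> (\<forall>k::int. \<forall>x\<in>G. of_int k *\<^sub>R x \<in> G)"
  unfolding Z.subspace_def by auto

lemma Z_span_subset_span: "Z.span S \<subseteq> span S"
  by (rule Z.span_minimal) (auto simp: Z.subspace_def span_base span_add span_scale span_zero)

lemma span_int_span: "span (int_span S) = span S"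
proof
  show "span (int_span S) \<subseteq> span S"
    unfolding int_span_eq_Z_span using Z_span_subset_span by (metis span_minimal subspace_span)
  show "span S \<subseteq> span (int_span S)"
    unfolding int_span_eq_Z_span by (rule span_mono[OF Z.span_superset])
qed

lemma Z_subspace_linear_image:
  assumes T: "Z.subspace T" and f: "linear f"
  shows "Z.subspace (f ` T)"
  unfolding Z_subspace_iff
proof (intro conjI ballI allI)
  show "0 \<in> f ` T" using Z.subspace_0[OF T] linear_0[OF f] by (metis image_eqI)
next
  fix x y assume "x \<in> f ` T" "y \<in> f ` T"
  then obtain a b where "a \<in> T" "b \<in> T" "x = f a" "y = f b" by auto
  then show "x + y \<in> f ` T" using Z.subspace_add[OF T] linear_add[OF f] by (metis image_eqI)
next
  fix k :: int and x assume "x \<in> f ` T"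
  then obtain a where "a \<in> T" "x = f a" by auto
  then show "of_int k *\<^sub>R x \<in> f ` T"
    using Z.subspace_scale[OF T] linear_scale[OF f] by (metis image_eqI)
qed

lemma Z_subspace_linear_preimage_Ints:
  fixes \<phi> :: "'a::real_vector \<Rightarrow> real"
  assumes "linear \<phi>"
  shows "Z.subspace {x. \<phi> x \<in> \<int>}"
  using assms unfolding Z_subspace_iff
  by (auto simp: linear_0 linear_add linear_scale intro: Ints_add Ints_mult)

lemma (in Modules.module) span_set_list: "span (set xs) = {\<Sum>j<length xs. c j *s xs!j | c. True}"
proof (induction xs)
  case Nil
  then show ?case by auto
next
  case (Cons x xs)
  have "span (set (x#xs)) = {y. \<exists>k. y - k *s x \<in> span (set xs)}"
    by (simp add: span_insert)
  also have "\<dots> = {\<Sum>j<length (x#xs). c j *s (x#xs)!j | c. True}"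
  proof safe
    fix y k assume "y - k *s x \<in> span (set xs)"
    then obtain c where c: "y - k *s x = (\<Sum>j<length xs. c j *s xs!j)" using Cons by auto
    show "\<exists>c'. y = (\<Sum>j<length (x#xs). c' j *s (x#xs)!j) \<and> True"
      by (rule exI[of _ "\<lambda>j. case j of 0 \<Rightarrow> k | Suc j \<Rightarrow> c j"])
         (simp only: length_Cons sum.lessThan_Suc_shift, simp add: c[symmetric])
  next
    fix c
    show "\<exists>k. (\<Sum>j<length (x#xs). c j *s (x#xs)!j) - k *s x \<in> span (set xs)"
      using Cons by (intro exI[of _ "c 0"]) (simp only: length_Cons sum.lessThan_Suc_shift, auto)
  qed
  finally show ?case .
qed

lemma int_span_set_list: "int_span (set xs) = {\<Sum>j<length xs. of_int (c j) *\<^sub>R xs!j | c. True}"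
  unfolding int_span_eq_Z_span Z.span_set_list by simp

section \<open>Gram determinants\<close>

definition gram_mat :: "'a::euclidean_space list \<Rightarrow> real mat" where
  "gram_mat bs = mat (length bs) (length bs) (\<lambda>(i,j). bs!i \<bullet> bs!j)"

lemma gram_mat_carrier [simp]: "gram_mat bs \<in> carrier_mat (length bs) (length bs)"
  unfolding gram_mat_def by simp

lemma gram_det_eq_det_gram_mat: "gram_det bs = Determinant.det (gram_mat bs)"
proof -
  have "Determinant.det (gram_mat bs) = (\<Sum>p\<in>{p. p permutes {0..<length bs}}.
     signof p * (\<Prod>i = 0..<length bs. gram_mat bs $$ (i, p i)))"
    by (rule det_def'[OF gram_mat_carrier])
  also have "\<dots> = gram_det bs"
    unfolding gram_det_def lessThan_atLeast0
  proof (rule sum.cong[OF refl], rule arg_cong[where f="\<lambda>x. _ * x"], rule prod.cong[OF refl])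
    fix p i assume p: "p \<in> {p. p permutes {0..<length bs}}" and i: "i \<in> {0..<length bs}"
    have "p i < length bs" using permutes_in_image[of p "{0..<length bs}" i] p i by auto
    then show "gram_mat bs $$ (i, p i) = bs ! i \<bullet> bs ! p i" using i by (simp add: gram_mat_def)
  qed
  finally show ?thesis ..
qed

definition mat_lincomb :: "real mat \<Rightarrow> 'a::real_vector list \<Rightarrow> 'a list" where
  "mat_lincomb A bs = map (\<lambda>i. \<Sum>j<length bs. A $$ (i,j) *\<^sub>R bs!j) [0..<dim_row A]"

lemma length_mat_lincomb [simp]: "length (mat_lincomb A bs) = dim_row A"
  by (simp add: mat_lincomb_def)

lemma nth_mat_lincomb:
  "i < dim_row A \<Longrightarrow> mat_lincomb A bs ! i = (\<Sum>j<length bs. A $$ (i,j) *\<^sub>R bs!j)"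
  by (simp add: mat_lincomb_def)

lemma gram_mat_mat_lincomb:
  fixes bs :: "'a::euclidean_space list"
  assumes A: "A \<in> carrier_mat r (length bs)"
  shows "gram_mat (mat_lincomb A bs) = A * gram_mat bs * transpose_mat A"
proof (rule eq_matI)
  show "dim_row (gram_mat (mat_lincomb A bs)) = dim_row (A * gram_mat bs * transpose_mat A)"
    and "dim_col (gram_mat (mat_lincomb A bs)) = dim_col (A * gram_mat bs * transpose_mat A)"
    using A by (simp_all add: gram_mat_def)
  fix i j
  assume "i < dim_row (A * gram_mat bs * transpose_mat A)"
    and "j < dim_col (A * gram_mat bs * transpose_mat A)"
  then have ij: "i < r" "j < r" using A by auto
  have "gram_mat (mat_lincomb A bs) $$ (i,j)
      = (\<Sum>l<length bs. A $$ (i,l) *\<^sub>R bs!l) \<bullet> (\<Sum>k<length bs. A $$ (j,k) *\<^sub>R bs!k)"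
    using ij A by (simp add: gram_mat_def nth_mat_lincomb)
  also have "\<dots> = (\<Sum>l<length bs. \<Sum>k<length bs. A $$ (i,l) * A $$ (j,k) * (bs!l \<bullet> bs!k))"
    by (simp add: inner_sum_left inner_sum_right sum_distrib_left mult.assoc,
        subst sum.swap, simp add: ac_simps)
  also have "\<dots> = (\<Sum>k<length bs. \<Sum>l<length bs. A $$ (i,l) * (bs!l \<bullet> bs!k) * A $$ (j,k))"
    by (rule trans[OF sum.swap]) (auto intro!: sum.cong simp: ac_simps)
  also have "\<dots> = (A * gram_mat bs * transpose_mat A) $$ (i,j)"
    using ij A by (simp add: index_mult_mat scalar_prod_def gram_mat_def sum_distrib_right lessThan_atLeast0)
  finally show "gram_mat (mat_lincomb A bs) $$ (i,j) = (A * gram_mat bs * transpose_mat A) $$ (i,j)" .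
qed

lemma gram_det_mat_lincomb:
  fixes bs :: "'a::euclidean_space list"
  assumes A: "A \<in> carrier_mat r r" and l: "length bs = r"
  shows "gram_det (mat_lincomb A bs) = Determinant.det A ^ 2 * gram_det bs"
proof -
  have AG: "A * gram_mat bs \<in> carrier_mat r r" using A l by auto
  have "gram_det (mat_lincomb A bs) = Determinant.det (A * gram_mat bs * transpose_mat A)"
    using gram_mat_mat_lincomb[of A r bs] A l by (simp add: gram_det_eq_det_gram_mat)
  also have "\<dots> = Determinant.det (A * gram_mat bs) * Determinant.det (transpose_mat A)"
    by (rule det_mult[OF AG]) (use A in auto)
  also have "\<dots> = Determinant.det A * Determinant.det (gram_mat bs) * Determinant.det A"
    using det_mult[OF A, of "gram_mat bs"] l det_transpose[OF A] gram_mat_carrier[of bs] by simp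
  finally show ?thesis by (simp add: gram_det_eq_det_gram_mat power2_eq_square)
qed

lemma gram_det_Nil [simp]: "gram_det [] = 1"
  by (simp add: gram_det_def)

lemma gram_det_snoc_orthogonal:
  fixes s :: "'a::euclidean_space list"
  assumes orth: "\<forall>v\<in>set s. v \<bullet> z = 0"
  shows "gram_det (s @ [z]) = gram_det s * (z \<bullet> z)"
proof -
  let ?n = "length s"
  let ?B = "four_block_mat (gram_mat s) (0\<^sub>m ?n 1) (0\<^sub>m 1 ?n) (mat 1 1 (\<lambda>_. z \<bullet> z))"
  have eq: "gram_mat (s @ [z]) = ?B"
  proof (rule eq_matI)
    fix i j assume "i < dim_row ?B" "j < dim_col ?B"
    then have "i < Suc ?n" "j < Suc ?n" by (auto simp: gram_mat_def)
    then show "gram_mat (s @ [z]) $$ (i, j) = ?B $$ (i, j)"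
      using orth by (auto simp: gram_mat_def nth_append less_Suc_eq inner_commute)
  qed (auto simp: gram_mat_def)
  have "gram_det (s @ [z]) = Determinant.det (gram_mat s) * Determinant.det (mat 1 1 (\<lambda>_. z \<bullet> z))"
    unfolding gram_det_eq_det_gram_mat eq
    by (rule det_four_block_mat_upper_right_zero_col) auto
  also have "\<dots> = gram_det s * (z \<bullet> z)"
    by (simp add: gram_det_eq_det_gram_mat det_single)
  finally show ?thesis .
qed

lemma gram_det_singleton: "gram_det [f] = f \<bullet> f"
  using gram_det_snoc_orthogonal[of "[]" f] by simp

lemma gram_det_pairwise_orthogonal:
  fixes s :: "'a::euclidean_space list"
  assumes "distinct s" "\<forall>u\<in>set s. \<forall>v\<in>set s. u \<noteq> v \<longrightarrow> u \<bullet> v = 0"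
  shows "gram_det s = (\<Prod>x\<leftarrow>s. x \<bullet> x)"
  using assms
proof (induction s rule: rev_induct)
  case Nil then show ?case by simp
next
  case (snoc x s)
  have "\<forall>v\<in>set s. v \<bullet> x = 0" using snoc.prems by auto
  then show ?case using snoc by (simp add: gram_det_snoc_orthogonal)
qed

text \<open>Adding to the last vector a combination of the others is a unimodular change of basis.\<close>

lemma gram_det_snoc_perp:
  fixes s :: "'a::euclidean_space list"
  assumes y: "y \<in> span (set s)" and z: "\<forall>v\<in>set s. v \<bullet> z = 0"
  shows "gram_det (s @ [y + z]) = gram_det s * (z \<bullet> z)"
proof -
  let ?n = "length s"
  obtain c where c: "y = (\<Sum>j<?n. c j *\<^sub>R s!j)" using y unfolding real_vector.span_set_list by auto
  define A where
    "A = mat (Suc ?n) (Suc ?n) (\<lambda>(i,j). if i = j then 1 else if i = ?n \<and> j < ?n then c j else (0::real))"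
  have A: "A \<in> carrier_mat (Suc ?n) (Suc ?n)" by (simp add: A_def)
  have "mat_lincomb A (s @ [z]) = s @ [y + z]"
  proof (rule nth_equalityI)
    show "length (mat_lincomb A (s @ [z])) = length (s @ [y + z])" by (simp add: A_def)
    fix i assume "i < length (mat_lincomb A (s @ [z]))"
    then have i: "i < Suc ?n" by (simp add: A_def)
    show "mat_lincomb A (s @ [z]) ! i = (s @ [y + z]) ! i"
    proof (cases "i < ?n")
      case True
      have "mat_lincomb A (s @ [z]) ! i = (\<Sum>j<Suc ?n. (if i = j then 1 else 0) *\<^sub>R (s @ [z]) ! j)"
        using i True by (auto simp: nth_mat_lincomb A_def intro!: sum.cong)
      also have "\<dots> = (s @ [z]) ! i" using i
        by (simp add: if_distrib[of "\<lambda>r. r *\<^sub>R _"] cong: if_cong)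
      finally show ?thesis using True by (simp add: nth_append)
    next
      case False
      then have "i = ?n" using i by simp
      moreover have "mat_lincomb A (s @ [z]) ! ?n = (\<Sum>j<?n. c j *\<^sub>R s ! j) + z"
        by (simp add: nth_mat_lincomb A_def nth_append)
      ultimately show ?thesis using c by simp
    qed
  qed
  moreover have "Determinant.det A = 1"
  proof -
    have "Determinant.det A = prod_list (diag_mat A)"
      by (rule det_lower_triangular[OF _ A]) (auto simp: A_def)
    also have "diag_mat A = map (\<lambda>i. 1) [0..<Suc ?n]" by (simp add: diag_mat_def A_def)
    finally show ?thesis by (simp add: map_replicate_const)
  qed
  ultimately show ?thesis
    using gram_det_mat_lincomb[OF A, of "s @ [z]"] gram_det_snoc_orthogonal[OF z] by simp
qed

lemma gram_det_hadamard:
  fixes s :: "'a::euclidean_space list"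
  shows "0 \<le> gram_det s \<and> gram_det s \<le> (\<Prod>x\<leftarrow>s. x \<bullet> x) \<and>
    (independent (set s) \<and> distinct s \<longrightarrow> 0 < gram_det s)"
proof (induction s rule: rev_induct)
  case Nil then show ?case by simp
next
  case (snoc x s)
  obtain y z where y: "y \<in> span (set s)" and z: "\<And>w. w \<in> span (set s) \<Longrightarrow> z \<bullet> w = 0"
    and x: "x = y + z"
    using orthogonal_subspace_decomp_exists[of "set s" x]
    unfolding real_inner_class.orthogonal_def by blast
  have "\<forall>v\<in>set s. v \<bullet> z = 0" using z span_base by (force simp: inner_commute)
  then have g: "gram_det (s @ [x]) = gram_det s * (z \<bullet> z)"
    unfolding x by (rule gram_det_snoc_perp[OF y])
  have "y \<bullet> z = 0" using z[OF y] by (simp add: inner_commute)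
  then have zx: "z \<bullet> z \<le> x \<bullet> x"
    by (simp add: x inner_add_left inner_add_right inner_commute)
  have pos: "0 < gram_det (s @ [x])" if "independent (set (s @ [x]))" and "distinct (s @ [x])"
  proof -
    have "x \<notin> set s" using that(2) by simp
    then have ind: "independent (set s)" and "x \<notin> span (set s)"
      using that(1) by (auto simp: independent_insert)
    then have "z \<noteq> 0" using x y by auto
    moreover have "0 < gram_det s" using snoc.IH ind that(2) by simp
    ultimately show ?thesis using g by simp
  qed
  have "0 \<le> gram_det (s @ [x])" using snoc g by simp
  moreover have "gram_det (s @ [x]) \<le> (\<Prod>v\<leftarrow>s @ [x]. v \<bullet> v)"
    using snoc zx unfolding g by (simp add: mult_mono)
  ultimately show ?case using pos by blast
qed

lemma mat_lincomb_of_subset_int_span: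
  fixes s bs :: "'a::euclidean_space list"
  assumes l: "length s = r" "length bs = r" and sub: "set s \<subseteq> int_span (set bs)"
  shows "\<exists>A. A \<in> carrier_mat r r \<and> s = mat_lincomb A bs \<and> Determinant.det A \<in> \<int>"
proof -
  have "\<exists>c. s!i = (\<Sum>j<r. of_int (c j) *\<^sub>R bs!j)" if "i < r" for i
  proof -
    have "s!i \<in> int_span (set bs)" using sub l that by auto
    then show ?thesis unfolding int_span_set_list using l(2) by auto
  qed
  then obtain C where C: "\<And>i. i < r \<Longrightarrow> s!i = (\<Sum>j<r. of_int (C i j) *\<^sub>R bs!j)"
    by metis
  define A where "A = map_mat real_of_int (mat r r (\<lambda>(i,j). C i j))"
  have "s = mat_lincomb A bs"
  proof (rule nth_equalityI)
    show "length s = length (mat_lincomb A bs)" using l by (simp add: A_def)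
    fix i assume "i < length s"
    then have i: "i < r" using l by simp
    have "mat_lincomb A bs ! i = (\<Sum>j<r. of_int (C i j) *\<^sub>R bs!j)"
      using i l by (simp add: nth_mat_lincomb A_def)
    then show "s ! i = mat_lincomb A bs ! i" using C[OF i] by simp
  qed
  moreover have "Determinant.det A \<in> \<int>"
    unfolding A_def of_int_hom.hom_det by simp
  moreover have "A \<in> carrier_mat r r" by (simp add: A_def)
  ultimately show ?thesis by blast
qed

lemma gram_det_le_sublattice:
  fixes s bs :: "'a::euclidean_space list"
  assumes l: "length s = length bs" and sub: "set s \<subseteq> int_span (set bs)"
    and ind: "independent (set s)" and dis: "distinct s"
  shows "0 < gram_det bs \<and> gram_det bs \<le> gram_det s"
proof -
  obtain A where A: "A \<in> carrier_mat (length bs) (length bs)" "s = mat_lincomb A bs"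
    and detA: "Determinant.det A \<in> \<int>"
    using mat_lincomb_of_subset_int_span[OF l refl sub] by blast
  have g: "gram_det s = Determinant.det A ^ 2 * gram_det bs"
    using gram_det_mat_lincomb[OF A(1) refl] A(2) by simp
  have pos: "0 < gram_det s" using gram_det_hadamard[of s] ind dis by simp
  obtain d where d: "Determinant.det A = of_int d" using detA Ints_cases by blast
  have "d \<noteq> 0" using g pos d by auto
  then have "1 \<le> d ^ 2" by (simp add: int_one_le_iff_zero_less)
  then have d1: "1 \<le> Determinant.det A ^ 2" unfolding d
    by (metis of_int_le_iff of_int_1 of_int_power)
  then have "0 < gram_det bs" using g pos by (simp add: zero_less_mult_iff)
  moreover have "gram_det bs \<le> Determinant.det A ^ 2 * gram_det bs"
    using d1 calculation by simp
  ultimately show ?thesis using g by simp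
qed

lemma perp_proj_unique:
  fixes V :: "'a::euclidean_space set"
  assumes V: "subspace V" and xy: "x - y \<in> V" and orth: "\<forall>v\<in>V. v \<bullet> y = 0"
  shows "perp_proj V x = y"
  unfolding perp_proj_def
proof (rule the_equality)
  show "x - y \<in> V \<and> (\<forall>v\<in>V. v \<bullet> y = 0)" using xy orth by blast
next
  fix y' assume y': "x - y' \<in> V \<and> (\<forall>v\<in>V. v \<bullet> y' = 0)"
  have "y - y' \<in> V" using subspace_diff[OF V, of "x - y'" "x - y"] y' xy by simp
  then have "(y - y') \<bullet> (y - y') = 0"
    using orth y' by (simp add: inner_diff_right)
  then show "y' = y" by simp
qed

lemma perp_proj_decomp:
  fixes V :: "'a::euclidean_space set"
  assumes V: "subspace V"
  shows "x - perp_proj V x \<in> V" "\<forall>v\<in>V. v \<bullet> perp_proj V x = 0"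
proof -
  obtain y z where y: "y \<in> span V" and z: "\<And>w. w \<in> span V \<Longrightarrow> z \<bullet> w = 0" and x: "x = y + z"
    using orthogonal_subspace_decomp_exists[of V x] unfolding real_inner_class.orthogonal_def by blast
  have sV: "span V = V" using V by simp
  have "perp_proj V x = z"
    by (rule perp_proj_unique[OF V]) (use y z x sV in \<open>auto simp: inner_commute\<close>)
  then show "x - perp_proj V x \<in> V" "\<forall>v\<in>V. v \<bullet> perp_proj V x = 0"
    using y z x sV by (auto simp: inner_commute)
qed

lemma linear_perp_proj:
  fixes V :: "'a::euclidean_space set"
  assumes V: "subspace V"
  shows "linear (perp_proj V)"
proof (rule linearI)
  note d = perp_proj_decomp[OF V]
  fix x y
  show "perp_proj V (x + y) = perp_proj V x + perp_proj V y"
  proof (rule perp_proj_unique[OF V])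
    have "(x + y) - (perp_proj V x + perp_proj V y) = (x - perp_proj V x) + (y - perp_proj V y)" by simp
    then show "x + y - (perp_proj V x + perp_proj V y) \<in> V"
      using d(1)[of x] d(1)[of y] subspace_add[OF V] by metis
    show "\<forall>v\<in>V. v \<bullet> (perp_proj V x + perp_proj V y) = 0"
      using d(2)[of x] d(2)[of y] by (simp add: inner_add_right)
  qed
next
  note d = perp_proj_decomp[OF V]
  fix c x
  show "perp_proj V (c *\<^sub>R x) = c *\<^sub>R perp_proj V x"
  proof (rule perp_proj_unique[OF V])
    have "c *\<^sub>R x - c *\<^sub>R perp_proj V x = c *\<^sub>R (x - perp_proj V x)" by (simp add: scaleR_diff_right)
    then show "c *\<^sub>R x - c *\<^sub>R perp_proj V x \<in> V"
      using d(1)[of x] subspace_mul[OF V] by metis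
    show "\<forall>v\<in>V. v \<bullet> (c *\<^sub>R perp_proj V x) = 0"
      using d(2)[of x] by simp
  qed
qed

lemma norm_perp_proj_le:
  fixes V :: "'a::euclidean_space set"
  assumes V: "subspace V"
  shows "norm (perp_proj V x) \<le> norm x"
proof -
  let ?p = "perp_proj V x"
  have "(x - ?p) \<bullet> ?p = 0" using perp_proj_decomp[OF V, of x] by blast
  then have "x \<bullet> x = (x - ?p) \<bullet> (x - ?p) + ?p \<bullet> ?p"
    by (simp add: inner_diff_left inner_diff_right inner_commute)
  then have "?p \<bullet> ?p \<le> x \<bullet> x" by simp
  then show ?thesis by (simp add: norm_le)
qed

no_notation
  Matrix.vec_index (infixl \<open>$\<close> 100) and
  Matrix.scalar_prod (infix \<open>\<bullet>\<close> 70)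

section \<open>Subgroups with bounded denominators are lattices\<close>

text \<open>\<open>q\<close> minimises the positive values of \<open>D * q$p\<close>; Euclidean division by \<open>q$p\<close> then moves
  every element of \<open>G\<close> into the hyperplane \<open>x$p = 0\<close>.\<close>

lemma exists_coordinate_generator:
  fixes G :: "(real^'i) set"
  assumes G: "Z.subspace G" and D: "D > 0" and int: "\<forall>h\<in>G. D * h$p \<in> \<int>"
    and g: "g \<in> G" "g$p \<noteq> 0"
  shows "\<exists>q\<in>G. q$p \<noteq> 0 \<and> (\<forall>h\<in>G. \<exists>c::int. (h - of_int c *\<^sub>R q)$p = 0)"
proof -
  define N where "N = {n::nat. 0 < n \<and> (\<exists>h\<in>G. D * h$p = real n)}"
  obtain z where z: "D * g$p = of_int z" using int g(1) Ints_cases by metis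
  have "nat \<bar>z\<bar> \<in> N"
  proof (cases "z > 0")
    case True
    then show ?thesis unfolding N_def using g z by (intro CollectI conjI bexI[of _ g]) auto
  next
    case False
    then have "z < 0" using z g D by (cases "z = 0") auto
    moreover have "-g \<in> G" using Z.subspace_neg[OF G g(1)] by simp
    ultimately show ?thesis unfolding N_def using z by (intro CollectI conjI bexI[of _ "-g"]) auto
  qed
  define n0 where "n0 = (LEAST n. n \<in> N)"
  have "n0 \<in> N" unfolding n0_def using \<open>nat \<bar>z\<bar> \<in> N\<close> by (rule LeastI)
  then obtain q where q: "q \<in> G" "D * q$p = real n0" and n0: "0 < n0" unfolding N_def by auto
  have "\<exists>c::int. (h - of_int c *\<^sub>R q)$p = 0" if h: "h \<in> G" for h
  proof -
    obtain v where v: "D * h$p = of_int v" using int h Ints_cases by metis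
    define c where "c = v div int n0"
    define r where "r = v mod int n0"
    have r: "0 \<le> r" "r < int n0" using n0 by (auto simp: r_def)
    have hG: "h - of_int c *\<^sub>R q \<in> G"
      using Z.subspace_diff[OF G h Z.subspace_scale[OF G q(1), of c]] by simp
    have "v = c * int n0 + r" by (simp add: c_def r_def)
    then have val: "D * (h - of_int c *\<^sub>R q)$p = of_int r"
      using v q(2) by (simp add: algebra_simps)
    have "r = 0"
    proof (rule ccontr)
      assume "r \<noteq> 0"
      then have "nat r \<in> N" unfolding N_def using r val hG by (intro CollectI conjI bexI) auto
      then have "n0 \<le> nat r" unfolding n0_def by (rule Least_le)
      then show False using r by linarith
    qed
    then show ?thesis using val D by (intro exI[of _ c]) simp
  qed
  with q n0 D show ?thesis by (intro bexI[of _ q]) auto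
qed

lemma Z_subspace_eq_Z_span_insert:
  assumes G: "Z.subspace G" and q: "q \<in> G" and H: "H \<subseteq> G" "H = Z.span B"
    and red: "\<And>h. h \<in> G \<Longrightarrow> \<exists>c::int. h - of_int c *\<^sub>R q \<in> H"
  shows "G = Z.span (insert q B)"
proof
  show "G \<subseteq> Z.span (insert q B)"
  proof
    fix h assume "h \<in> G"
    then obtain c where "h - of_int c *\<^sub>R q \<in> H" using red by blast
    then show "h \<in> Z.span (insert q B)" unfolding Z.span_insert H(2) by auto
  qed
  show "Z.span (insert q B) \<subseteq> G"
  proof
    fix h assume "h \<in> Z.span (insert q B)"
    then obtain k where k: "h - of_int k *\<^sub>R q \<in> H"
      unfolding Z.span_insert H(2) by auto
    have "h = (h - of_int k *\<^sub>R q) + of_int k *\<^sub>R q" by simp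
    then show "h \<in> G"
      using k H(1) Z.subspace_add[OF G _ Z.subspace_scale[OF G q]] by (metis subsetD)
  qed
qed

lemma Z_subspace_has_independent_generators:
  fixes G :: "(real^'i) set"
  assumes S: "finite S" and G: "Z.subspace G" and D: "D > 0" and int: "\<forall>g\<in>G. \<forall>i. D * g$i \<in> \<int>"
    and supp: "\<forall>g\<in>G. \<forall>i. i \<notin> S \<longrightarrow> g$i = 0"
  shows "\<exists>bs. distinct bs \<and> independent (set bs) \<and> G = Z.span (set bs)"
  using S G int supp
proof (induction S arbitrary: G rule: finite_induct)
  case empty
  then have "G = {0}"
    using Z.subspace_0[OF empty.prems(1)] by (auto simp: Finite_Cartesian_Product.vec_eq_iff)
  then show ?case by (intro exI[of _ "[]"]) (auto simp: independent_empty)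
next
  case (insert p S)
  define G0 where "G0 = {g\<in>G. g$p = 0}"
  have "Z.subspace G0" using insert.prems(1) unfolding G0_def Z_subspace_iff by simp
  moreover have "\<forall>g\<in>G0. \<forall>i. D * g$i \<in> \<int>" using insert.prems(2) by (simp add: G0_def)
  moreover have "\<forall>g\<in>G0. \<forall>i. i \<notin> S \<longrightarrow> g$i = 0"
    using insert.prems(3) by (auto simp: G0_def)
  ultimately obtain bs0 where bs0: "distinct bs0" "independent (set bs0)" "G0 = Z.span (set bs0)"
    using insert.IH by blast
  show ?case
  proof (cases "\<forall>g\<in>G. g$p = 0")
    case True
    then have "G = G0" by (auto simp: G0_def)
    then show ?thesis using bs0 by blast
  next
    case False
    then obtain g where "g \<in> G" "g$p \<noteq> 0" by blast
    then obtain q where q: "q \<in> G" "q$p \<noteq> 0" and red0: "\<forall>h\<in>G. \<exists>c::int. (h - of_int c *\<^sub>R q)$p = 0"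
      using exists_coordinate_generator[OF insert.prems(1) D] insert.prems(2) by blast
    have red: "\<forall>h\<in>G. \<exists>c::int. h - of_int c *\<^sub>R q \<in> G0"
      using red0 Z.subspace_diff[OF insert.prems(1)] Z.subspace_scale[OF insert.prems(1) q(1)]
      unfolding G0_def by blast
    have "G = Z.span (insert q (set bs0))"
      by (rule Z_subspace_eq_Z_span_insert[OF insert.prems(1) q(1) _ bs0(3)])
        (use red in \<open>auto simp: G0_def\<close>)
    moreover have "span (set bs0) \<subseteq> {x. x$p = 0}"
    proof (rule span_minimal)
      show "set bs0 \<subseteq> {x. x$p = 0}" using bs0(3) Z.span_superset[of "set bs0"] by (auto simp: G0_def)
      show "subspace {x::real^'i. x$p = 0}" by (auto simp: subspace_def)
    qed
    then have "q \<notin> span (set bs0)" using q(2) by auto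
    moreover have "q \<notin> set bs0" using calculation(2) span_base by blast
    ultimately show ?thesis
      using bs0 by (intro exI[of _ "q # bs0"]) (auto simp: independent_insert)
  qed
qed

lemma lattice_basis_exists:
  fixes G :: "(real^'i) set"
  assumes "Z.subspace G" and "D > 0" and "\<forall>g\<in>G. \<forall>i. D * g$i \<in> \<int>"
  shows "\<exists>bs. lattice_basis G bs"
  using Z_subspace_has_independent_generators[OF finite_class.finite_UNIV assms]
  by (simp add: lattice_basis_def int_span_eq_Z_span)

definition rational_vec :: "real^'i \<Rightarrow> bool" where
  "rational_vec x \<longleftrightarrow> (\<forall>i. x$i \<in> \<rat>)"

lemma rational_vec_diff: "rational_vec x \<Longrightarrow> rational_vec y \<Longrightarrow> rational_vec (x - y)"
  by (simp add: rational_vec_def)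

lemma rational_vec_sum: "(\<And>x. x \<in> A \<Longrightarrow> rational_vec (f x)) \<Longrightarrow> rational_vec (sum f A)"
  by (induction A rule: infinite_finite_induct) (auto simp: rational_vec_def)

lemma rational_vec_scale: "c \<in> \<rat> \<Longrightarrow> rational_vec x \<Longrightarrow> rational_vec (c *\<^sub>R x)"
  by (simp add: rational_vec_def)

lemma inner_rational_vec: "rational_vec x \<Longrightarrow> rational_vec y \<Longrightarrow> x \<bullet> y \<in> \<rat>"
  unfolding inner_vec_def rational_vec_def by (auto intro!: Rats_sum)

lemma rational_vec_Gram_Schmidt_step:
  assumes "\<forall>t\<in>T. rational_vec t" "rational_vec a"
  shows "rational_vec (a - (\<Sum>b\<in>T. (b \<bullet> a / (b \<bullet> b)) *\<^sub>R b))"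
  using assms
  by (intro rational_vec_diff rational_vec_sum rational_vec_scale)
    (auto intro!: Rats_divide inner_rational_vec)

lemma rational_orthogonal_basis_exists:
  fixes B :: "(real^'i) set"
  assumes "finite B" "\<forall>b\<in>B. rational_vec b"
  shows "\<exists>T. finite T \<and> (\<forall>t\<in>T. rational_vec t) \<and> pairwise real_inner_class.orthogonal T \<and> span T = span B"
  using assms
proof (induction B rule: finite_induct)
  case empty
  show ?case by (intro exI[of _ "{}"]) auto
next
  case (insert a B)
  then obtain T where T: "finite T" "\<forall>t\<in>T. rational_vec t"
    "pairwise real_inner_class.orthogonal T" "span T = span B"
    by auto
  define a' where "a' = a - (\<Sum>b\<in>T. (b \<bullet> a / (b \<bullet> b)) *\<^sub>R b)"
  have "rational_vec a'" unfolding a'_def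
    using T(2) insert.prems by (intro rational_vec_Gram_Schmidt_step) auto
  moreover have "real_inner_class.orthogonal a' y" if "y \<in> T" for y
    using Gram_Schmidt_step[OF T(3) span_base[OF that]] unfolding a'_def
    by (simp add: orthogonal_commute)
  then have "pairwise real_inner_class.orthogonal (insert a' T)"
    using pairwise_orthogonal_insert[OF T(3)] by blast
  moreover have "a - a' \<in> span T" unfolding a'_def
    by (simp add: span_sum span_mul span_base)
  then have "span (insert a T) = span (insert a' T)"
    by (rule eq_span_insert_eq)
  then have "span (insert a' T) = span (insert a B)"
    using T(4) by (simp add: span_insert)
  ultimately show ?case using T by (intro exI[of _ "insert a' T"]) auto
qed

lemma rational_vec_perp_proj:
  fixes M :: "(real^'i) set"
  assumes M: "\<forall>m\<in>M. rational_vec m" and x: "rational_vec x"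
  shows "rational_vec (perp_proj (span M) x)"
proof -
  obtain B where B: "B \<subseteq> M" "independent B" "M \<subseteq> span B" "card B = dim M"
    using basis_exists by blast
  have "span B = span M"
  proof
    show "span B \<subseteq> span M" using B(1) by (rule span_mono)
    show "span M \<subseteq> span B" using B(3) by (simp add: span_minimal)
  qed
  moreover have "finite B" using B(2) by (rule independent_imp_finite)
  ultimately obtain T
    where T: "\<forall>t\<in>T. rational_vec t" "pairwise real_inner_class.orthogonal T" "span T = span M"
    using rational_orthogonal_basis_exists[of B] B(1) M by blast
  define y where "y = x - (\<Sum>b\<in>T. (b \<bullet> x / (b \<bullet> b)) *\<^sub>R b)"
  have "perp_proj (span M) x = y"
  proof (rule perp_proj_unique)
    show "x - y \<in> span M" unfolding y_def T(3)[symmetric]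
      by (simp add: span_sum span_mul span_base)
    show "\<forall>v\<in>span M. v \<bullet> y = 0"
      using Gram_Schmidt_step[OF T(2)] T(3) unfolding y_def real_inner_class.orthogonal_def by blast
  qed simp
  moreover have "rational_vec y" unfolding y_def using T(1) x by (rule rational_vec_Gram_Schmidt_step)
  ultimately show ?thesis by simp
qed

lemma common_denominator_exists:
  fixes F :: "real set"
  assumes "finite F" "F \<subseteq> \<rat>"
  shows "\<exists>D::int. D > 0 \<and> (\<forall>r\<in>F. of_int D * r \<in> \<int>)"
  using assms
proof (induction F rule: finite_induct)
  case empty
  show ?case by (intro exI[of _ 1]) auto
next
  case (insert r F)
  then obtain D :: int where D: "D > 0" "\<forall>s\<in>F. of_int D * s \<in> \<int>" by auto
  obtain a b where ab: "r = of_int a / of_int b" "b > 0" using insert.prems by (auto elim: Rats_cases')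
  have "of_int (D * b) * r = of_int (D * a)" using ab by (simp add: field_simps)
  moreover have "of_int (D * b) * s \<in> \<int>" if "s \<in> F" for s
  proof -
    have "of_int (D * b) * s = of_int b * (of_int D * s)" by simp
    then show ?thesis using D that by (metis Ints_mult Ints_of_int)
  qed
  ultimately show ?case using D ab by (intro exI[of _ "D * b"]) auto
qed

lemma vec_eq_sum_axis: "(x::real^'i) = (\<Sum>p\<in>UNIV. x$p *\<^sub>R axis p 1)"
  using basis_expansion[of x] by (simp add: scalar_mult_eq_scaleR)

lemma perp_proj_common_denominator:
  fixes T M :: "(real^'i) set" and D :: int
  assumes D: "D > 0" and DT: "\<forall>t\<in>T. \<forall>i. of_int D * t$i \<in> \<int>" and MT: "M \<subseteq> T"
  shows "\<exists>D'::real. D' > 0 \<and> (\<forall>t\<in>T. \<forall>i. D' * (perp_proj (span M) t)$i \<in> \<int>)"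
proof -
  let ?P = "perp_proj (span M)"
  have "rational_vec m" if "m \<in> M" for m
  proof -
    have "m$i = (of_int D * m$i) / of_int D" for i using D by simp
    then show ?thesis using DT MT that Ints_subset_Rats unfolding rational_vec_def
      by (metis Rats_divide Rats_of_int subsetD)
  qed
  then have "rational_vec (?P (axis p 1))" for p
    by (intro rational_vec_perp_proj) (auto simp: rational_vec_def axis_def)
  then have "range (\<lambda>(p,i). ?P (axis p 1) $ i) \<subseteq> \<rat>" by (auto simp: rational_vec_def)
  then obtain E :: int where E: "E > 0" "\<forall>r\<in>range (\<lambda>(p,i). ?P (axis p 1) $ i). of_int E * r \<in> \<int>"
    using common_denominator_exists[OF finite_imageI[OF finite_class.finite_UNIV]] by blast
  have Ep: "of_int E * ?P (axis p 1) $ i \<in> \<int>" for p i using E(2) by auto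
  show ?thesis
  proof (intro exI[of _ "of_int (D * E)"] conjI ballI allI)
    show "real_of_int (D * E) > 0" using D E by simp
    fix t i assume t: "t \<in> T"
    have lin: "linear ?P" by (rule linear_perp_proj) simp
    have "?P t = ?P (\<Sum>p\<in>UNIV. t$p *\<^sub>R axis p 1)" using vec_eq_sum_axis[of t] by simp
    also have "\<dots> = (\<Sum>p\<in>UNIV. t$p *\<^sub>R ?P (axis p 1))"
      using lin by (simp add: linear_sum linear_scale)
    finally have "?P t = (\<Sum>p\<in>UNIV. t$p *\<^sub>R ?P (axis p 1))" .
    then have "of_int (D * E) * ?P t $ i = (\<Sum>p\<in>UNIV. (of_int D * t$p) * (of_int E * ?P (axis p 1) $ i))"
      by (simp add: sum_component sum_distrib_left ac_simps)
    also have "\<dots> \<in> \<int>" by (intro Ints_sum, rule Ints_mult) (use DT t Ep in auto)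
    finally show "real_of_int (D * E) * ?P t $ i \<in> \<int>" .
  qed
qed

section \<open>Covolumes and slopes\<close>

lemma lattice_basis_span: "lattice_basis L bs \<Longrightarrow> span L = span (set bs)"
  unfolding lattice_basis_def using span_int_span by blast

lemma length_lattice_basis: "lattice_basis L bs \<Longrightarrow> length bs = dim (span L)"
  using lattice_basis_span[of L bs] dim_eq_card_independent[of "set bs"] distinct_card[of bs]
  unfolding lattice_basis_def by (simp add: dim_span)

lemma covol_eq_gram_det:
  assumes bs: "lattice_basis L bs"
  shows "covol L = sqrt (gram_det bs)"
proof -
  define bs0 where "bs0 = (SOME bs. lattice_basis L bs)"
  have bs0: "lattice_basis L bs0" unfolding bs0_def using bs by (rule someI)
  have l: "length bs0 = length bs" using length_lattice_basis[OF bs0] length_lattice_basis[OF bs] by simp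
  have "set bs0 \<subseteq> int_span (set bs)" "set bs \<subseteq> int_span (set bs0)"
    using bs bs0 Z.span_superset unfolding lattice_basis_def int_span_eq_Z_span by metis+
  then have "gram_det bs \<le> gram_det bs0" "gram_det bs0 \<le> gram_det bs"
    using gram_det_le_sublattice[OF l] gram_det_le_sublattice[OF l[symmetric]] bs bs0
    unfolding lattice_basis_def by blast+
  then show ?thesis unfolding covol_def bs0_def[symmetric] by simp
qed

lemma prod_list_le_power:
  fixes f :: "'b \<Rightarrow> real"
  assumes "\<forall>x\<in>set xs. 0 \<le> f x \<and> f x \<le> c"
  shows "(\<Prod>x\<leftarrow>xs. f x) \<le> c ^ length xs"
  using assms
proof (induction xs)
  case Nil then show ?case by simp
next
  case (Cons a xs)
  have "0 \<le> (\<Prod>x\<leftarrow>xs. f x)" using Cons.prems by (induction xs) auto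
  then show ?case using Cons by (simp, intro mult_mono) auto
qed

text \<open>Compare with the full-rank sublattice spanned by a basis of \<open>span B\<close> drawn from \<open>B\<close>,
  and apply Hadamard's inequality to it.\<close>

lemma covol_le_power_of_generators:
  assumes bs: "lattice_basis Q bs" and BQ: "B \<subseteq> Q" and QB: "Q \<subseteq> span B"
    and C: "\<forall>x\<in>B. norm x \<le> C" and C0: "0 \<le> C"
  shows "covol Q \<le> C ^ length bs"
proof -
  obtain Bs where Bs: "Bs \<subseteq> B" "independent Bs" "B \<subseteq> span Bs" "card Bs = dim B"
    using basis_exists by blast
  obtain sl where sl: "set sl = Bs" "distinct sl"
    using finite_distinct_list[OF independent_imp_finite[OF Bs(2)]] by blast
  have "span B = span Q" using BQ QB span_mono[of B Q] span_minimal[of Q "span B"] by auto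
  then have len: "length sl = length bs"
    using length_lattice_basis[OF bs] sl Bs(4) distinct_card[OF sl(2)] dim_span[of B] by simp
  have "set sl \<subseteq> int_span (set bs)"
    using sl Bs(1) BQ bs unfolding lattice_basis_def by blast
  then have g: "0 < gram_det bs" "gram_det bs \<le> gram_det sl"
    using gram_det_le_sublattice[OF len] sl Bs(2) by auto
  have "gram_det sl \<le> (\<Prod>x\<leftarrow>sl. x \<bullet> x)" using gram_det_hadamard[of sl] by simp
  also have "\<dots> \<le> (C\<^sup>2) ^ length sl"
  proof (rule prod_list_le_power, intro ballI conjI)
    fix x assume "x \<in> set sl"
    then have "norm x \<le> C" using C sl Bs(1) by auto
    then show "x \<bullet> x \<le> C\<^sup>2" by (simp add: power2_norm_eq_inner[symmetric] power_mono)
  qed simp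
  finally have "gram_det bs \<le> (C ^ length bs)\<^sup>2"
    using g len by (simp add: power_mult_distrib power_mult[symmetric] mult.commute)
  then have "sqrt (gram_det bs) \<le> \<bar>C ^ length bs\<bar>" using real_sqrt_le_mono by fastforce
  then show ?thesis unfolding covol_eq_gram_det[OF bs] using C0 by simp
qed

lemma slope_ge_neg_ln:
  assumes bs: "lattice_basis Q bs" and "B \<subseteq> Q" "Q \<subseteq> span B"
    and "\<forall>x\<in>B. norm x \<le> C" and C: "1 \<le> C"
  shows "- ln C \<le> slope Q"
proof (cases "bs = []")
  case True
  then have "lattice_rank Q = 0" using length_lattice_basis[OF bs] by (simp add: lattice_rank_def)
  then show ?thesis using C by (simp add: slope_def)
next
  case False
  let ?r = "length bs"
  have r: "lattice_rank Q = ?r" unfolding lattice_rank_def using length_lattice_basis[OF bs] by simp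
  have "0 < gram_det bs" using gram_det_hadamard[of bs] bs unfolding lattice_basis_def by simp
  then have "0 < covol Q" using covol_eq_gram_det[OF bs] by simp
  moreover have "covol Q \<le> C ^ ?r" using covol_le_power_of_generators[OF assms(1-4)] C by simp
  ultimately have "ln (covol Q) \<le> ln (C ^ ?r)" using C by (subst ln_le_cancel_iff) auto
  also have "\<dots> = real ?r * ln C" using C by (simp add: ln_realpow)
  finally have "(1 / real ?r) * ln (covol Q) \<le> ln C"
    using False by (simp add: field_simps)
  then show ?thesis unfolding slope_def r by simp
qed

lemma slope_lattice_quot_ge:
  fixes T M B :: "(real^'p) set" and D :: int
  assumes T: "Z.subspace T" and D: "D > 0" and DT: "\<forall>t\<in>T. \<forall>i. of_int D * t$i \<in> \<int>"
    and MT: "M \<subseteq> T" and BT: "B \<subseteq> T" and TB: "T \<subseteq> span B"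
    and C: "\<forall>x\<in>B. norm x \<le> C" "1 \<le> C"
  shows "- ln C \<le> slope (lattice_quot T M)"
proof -
  let ?P = "perp_proj (span M)"
  have P: "linear ?P" by (rule linear_perp_proj) simp
  have Q: "lattice_quot T M = ?P ` T" unfolding lattice_quot_def ..
  obtain D' where "D' > 0" "\<forall>t\<in>T. \<forall>i. D' * (?P t)$i \<in> \<int>"
    using perp_proj_common_denominator[OF D DT MT] by blast
  then obtain bs where bs: "lattice_basis (?P ` T) bs"
    using lattice_basis_exists[OF Z_subspace_linear_image[OF T P]] by blast
  have "?P ` T \<subseteq> ?P ` span B" using TB by (rule image_mono)
  also have "\<dots> = span (?P ` B)" using span_linear_image[OF P] by simp
  finally have "?P ` T \<subseteq> span (?P ` B)" .
  moreover have "norm (?P x) \<le> C" if "x \<in> B" for x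
    using C(1) that norm_perp_proj_le[of "span M" x] by force
  moreover have "?P ` B \<subseteq> ?P ` T" using BT by (rule image_mono)
  ultimately show ?thesis unfolding Q
    by (intro slope_ge_neg_ln[OF bs _ _ _ C(2)]) auto
qed

lemma lattice_quot_orthogonal_unit_vector:
  fixes T :: "'a::euclidean_space set"
  assumes T: "Z.subspace T" and f: "f \<in> T" "f \<bullet> f = 1" and Tf: "\<And>t. t \<in> T \<Longrightarrow> t \<bullet> f \<in> \<int>"
  shows "lattice_quot T {t\<in>T. t \<bullet> f = 0} = Z.span {f}"
proof -
  define M where "M = {t\<in>T. t \<bullet> f = 0}"
  have spM: "span M \<subseteq> {x. x \<bullet> f = 0}"
    by (rule span_minimal) (auto simp: M_def subspace_def inner_add_left)
  have P: "perp_proj (span M) t = (t \<bullet> f) *\<^sub>R f" if t: "t \<in> T" for t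
  proof (rule perp_proj_unique)
    obtain c where c: "t \<bullet> f = of_int c" using Tf[OF t] Ints_cases by metis
    have "t - (t \<bullet> f) *\<^sub>R f \<in> T"
      unfolding c using Z.subspace_diff[OF T t Z.subspace_scale[OF T f(1)]] by simp
    moreover have "(t - (t \<bullet> f) *\<^sub>R f) \<bullet> f = 0" using f(2) by (simp add: inner_diff_left)
    ultimately show "t - (t \<bullet> f) *\<^sub>R f \<in> span M" by (intro span_base) (simp add: M_def)
    show "\<forall>v\<in>span M. v \<bullet> ((t \<bullet> f) *\<^sub>R f) = 0" using spM by auto
  qed simp
  have "lattice_quot T M = Z.span {f}"
  proof
    show "lattice_quot T M \<subseteq> Z.span {f}"
    proof
      fix q assume "q \<in> lattice_quot T M"
      then obtain t where t: "t \<in> T" "q = (t \<bullet> f) *\<^sub>R f" unfolding lattice_quot_def using P by auto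
      obtain c where "t \<bullet> f = of_int c" using Tf[OF t(1)] Ints_cases by metis
      then show "q \<in> Z.span {f}" using t Z.span_singleton by auto
    qed
    show "Z.span {f} \<subseteq> lattice_quot T M"
    proof
      fix q assume "q \<in> Z.span {f}"
      then obtain c where c: "q = of_int c *\<^sub>R f" using Z.span_singleton by auto
      have cT: "of_int c *\<^sub>R f \<in> T" using Z.subspace_scale[OF T f(1)] by simp
      have "perp_proj (span M) (of_int c *\<^sub>R f) = q" using P[OF cT] c f(2) by simp
      then show "q \<in> lattice_quot T M" unfolding lattice_quot_def using cT by force
    qed
  qed
  then show ?thesis unfolding M_def .
qed

lemma lattice_quot_unit_vector_slope:
  fixes T :: "'a::euclidean_space set"
  assumes T: "Z.subspace T" and f: "f \<in> T" "f \<bullet> f = 1" and Tf: "\<And>t. t \<in> T \<Longrightarrow> t \<bullet> f \<in> \<int>"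
  shows "\<exists>M. primitive_sublattice M T \<and> M \<noteq> T \<and> slope (lattice_quot T M) = 0"
proof -
  let ?M = "{t\<in>T. t \<bullet> f = 0}"
  have "span ?M \<subseteq> {x. x \<bullet> f = 0}"
    by (rule span_minimal) (auto simp: subspace_def inner_add_left)
  then have "primitive_sublattice ?M T"
    unfolding primitive_sublattice_def using span_superset[of ?M] by auto
  moreover have "f \<notin> ?M" using f(2) by simp
  then have "?M \<noteq> T" using f(1) by blast
  moreover have "lattice_basis (lattice_quot T ?M) [f]"
    using f(2) lattice_quot_orthogonal_unit_vector[OF T f Tf]
    by (auto simp: lattice_basis_def int_span_eq_Z_span independent_insert independent_empty)
  then have "covol (lattice_quot T ?M) = 1"
    using gram_det_singleton[of f] f(2) by (simp add: covol_eq_gram_det)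
  ultimately show ?thesis unfolding slope_def by auto
qed

lemma min_slope_nonpos:
  fixes T B :: "(real^'p) set" and D :: int
  assumes T: "Z.subspace T" and f: "f \<in> T" "f \<bullet> f = 1" and Tf: "\<And>t. t \<in> T \<Longrightarrow> t \<bullet> f \<in> \<int>"
    and D: "D > 0" and DT: "\<And>t i. t \<in> T \<Longrightarrow> of_int D * t$i \<in> \<int>"
    and B: "B \<subseteq> T" "T \<subseteq> span B" and BC: "\<And>x. x \<in> B \<Longrightarrow> norm x \<le> C" and C: "1 \<le> C"
  shows "min_slope T \<le> 0"
proof -
  let ?X = "{slope (lattice_quot T M) | M. primitive_sublattice M T \<and> M \<noteq> T}"
  have "0 \<in> ?X" using lattice_quot_unit_vector_slope[OF T f Tf] by auto
  moreover have "bdd_below ?X"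
  proof (rule bdd_belowI)
    fix x assume "x \<in> ?X"
    then obtain M where "M \<subseteq> T" "x = slope (lattice_quot T M)"
      unfolding primitive_sublattice_def by auto
    then show "- ln C \<le> x" using slope_lattice_quot_ge[OF T D _ _ B _ C] DT BC by blast
  qed
  ultimately show ?thesis unfolding min_slope_def by (rule cInf_lower)
qed

lemma tensor_vec_nth: "tensor_vec a b $ p = a $ fst p * b $ snd p"
  by (simp add: tensor_vec_def)

lemma inner_tensor_vec: "tensor_vec a b \<bullet> tensor_vec c d = (a \<bullet> c) * (b \<bullet> d)"
proof -
  have "tensor_vec a b \<bullet> tensor_vec c d
      = (\<Sum>p\<in>UNIV \<times> UNIV. (a $ fst p * b $ snd p) * (c $ fst p * d $ snd p))"
    unfolding inner_vec_def tensor_vec_nth UNIV_Times_UNIV by simp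
  also have "\<dots> = (\<Sum>(i,j)\<in>UNIV \<times> UNIV. (a$i * c$i) * (b$j * d$j))"
    by (rule sum.cong) (auto simp: ac_simps)
  also have "\<dots> = (a \<bullet> c) * (b \<bullet> d)"
    unfolding inner_vec_def sum.cartesian_product[symmetric] by (simp add: sum_product)
  finally show ?thesis .
qed

lemma norm_tensor_vec: "norm (tensor_vec a b) = norm a * norm b"
  unfolding norm_eq_sqrt_inner inner_tensor_vec by (simp add: real_sqrt_mult)

lemma tensor_vec_linear_left: "linear (\<lambda>a. tensor_vec a b)"
  by (rule linearI) (simp_all add: Finite_Cartesian_Product.vec_eq_iff tensor_vec_nth algebra_simps)

lemma tensor_vec_linear_right: "linear (\<lambda>b. tensor_vec a b)"
  by (rule linearI) (simp_all add: Finite_Cartesian_Product.vec_eq_iff tensor_vec_nth algebra_simps)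

lemma tensor_vec_in_span:
  fixes A B :: "(real^'n) set"
  assumes a: "a \<in> span A" and b: "b \<in> span B"
  shows "tensor_vec a b \<in> span {tensor_vec x y | x y. x \<in> A \<and> y \<in> B}"
proof -
  let ?G = "span {tensor_vec x y | x y. x \<in> A \<and> y \<in> B}"
  have "tensor_vec x b \<in> ?G" if x: "x \<in> A" for x
  proof -
    have "span B \<subseteq> (\<lambda>b. tensor_vec x b) -` ?G"
      by (rule span_minimal)
        (use x in \<open>auto intro: span_base linear_subspace_vimage[OF tensor_vec_linear_right]\<close>)
    then show ?thesis using b by blast
  qed
  then have "span A \<subseteq> (\<lambda>a. tensor_vec a b) -` ?G"
    by (intro span_minimal) (auto intro: linear_subspace_vimage[OF tensor_vec_linear_left])
  then show ?thesis using a by blast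
qed

section \<open>A family of rational points with vanishing freeness\<close>

lemma Z_subspace_int_points: "Z.subspace int_points"
  unfolding Z_subspace_iff int_points_def by auto

lemma inner_int_points: "x \<in> int_points \<Longrightarrow> y \<in> int_points \<Longrightarrow> x \<bullet> y \<in> \<int>"
  unfolding int_points_def inner_vec_def by (auto intro!: Ints_sum Ints_mult)

lemma sum_axis_nth: "(\<Sum>i\<in>I. f i *\<^sub>R axis i (1::real)) $ j = (if j \<in> I then f j else 0)"
proof -
  have "(\<Sum>i\<in>I. f i *\<^sub>R axis i (1::real)) $ j = (\<Sum>i\<in>I. if i = j then f i else 0)"
    unfolding sum_component by (rule sum.cong) (auto simp: axis_def)
  also have "\<dots> = (if j \<in> I then f j else 0)"
    by (cases "finite I") (auto simp: sum.delta)
  finally show ?thesis .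
qed

definition skew_vec :: "'n \<Rightarrow> 'n \<Rightarrow> nat \<Rightarrow> real^'n" where
  "skew_vec a b k = axis a 1 + real k *\<^sub>R axis b 1"

definition skew_gens :: "'n set \<Rightarrow> 'n \<Rightarrow> 'n \<Rightarrow> nat \<Rightarrow> (real^'n) set" where
  "skew_gens I a b k = insert (skew_vec a b k) ((\<lambda>i. axis i 1) ` I)"

definition skew_lattice :: "'n set \<Rightarrow> 'n \<Rightarrow> 'n \<Rightarrow> nat \<Rightarrow> (real^'n) set" where
  "skew_lattice I a b k = span (skew_gens I a b k) \<inter> int_points"

locale skew_lattice_indices =
  fixes I :: "'n::finite set" and a b i0 j0 :: 'n and k :: nat
  assumes ab: "a \<noteq> b" "a \<notin> I" "b \<notin> I" and i0: "i0 \<in> I" and j0: "j0 \<notin> I" "j0 \<noteq> a" "j0 \<noteq> b"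
    and k: "k \<ge> 1"
begin

abbreviation "w \<equiv> skew_vec a b k"
abbreviation "S \<equiv> skew_gens I a b k"
abbreviation "L \<equiv> skew_lattice I a b k"
abbreviation "K \<equiv> 1 + real k ^ 2"

lemma skew_vec_nth: "w $ j = (if j = a then 1 else if j = b then real k else 0)"
  using ab by (simp add: skew_vec_def axis_def)

lemma inner_skew_vec: "x \<bullet> w = x$a + real k * x$b"
  unfolding skew_vec_def by (simp add: inner_add_right inner_axis)

lemma inner_skew_vec_self: "w \<bullet> w = K"
  using ab by (simp add: inner_skew_vec skew_vec_nth power2_eq_square)

lemma inner_skew_vec_axis: "i \<in> I \<Longrightarrow> w \<bullet> axis i 1 = 0"
  using ab by (auto simp: inner_axis skew_vec_nth)

lemma K_Ints: "K \<in> \<int>"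
  by (metis Ints_of_nat of_nat_1 of_nat_add of_nat_power)

lemma span_gens_nth:
  assumes "x \<in> span S"
  shows "x$b = real k * x$a" "\<And>j. j \<notin> I \<Longrightarrow> j \<noteq> a \<Longrightarrow> j \<noteq> b \<Longrightarrow> x$j = 0"
proof -
  let ?V = "{x::real^'n. x$b = real k * x$a \<and> (\<forall>j. j \<notin> I \<longrightarrow> j \<noteq> a \<longrightarrow> j \<noteq> b \<longrightarrow> x$j = 0)}"
  have "span S \<subseteq> ?V"
    by (rule span_minimal)
      (use ab in \<open>auto simp: skew_gens_def skew_vec_nth axis_def subspace_def algebra_simps\<close>)
  then show "x$b = real k * x$a" "\<And>j. j \<notin> I \<Longrightarrow> j \<noteq> a \<Longrightarrow> j \<noteq> b \<Longrightarrow> x$j = 0"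
    using assms by blast+
qed

lemma span_gens_expansion:
  assumes "x \<in> span S"
  shows "x = (\<Sum>i\<in>I. x$i *\<^sub>R axis i 1) + x$a *\<^sub>R w"
proof (subst Finite_Cartesian_Product.vec_eq_iff, intro allI)
  fix j
  have "((\<Sum>i\<in>I. x$i *\<^sub>R axis i 1) + x$a *\<^sub>R w) $ j = (if j \<in> I then x$j else 0) + x$a * w$j"
    by (simp only: vector_add_component vector_scaleR_component sum_axis_nth) simp
  then show "x $ j = ((\<Sum>i\<in>I. x$i *\<^sub>R axis i 1) + x$a *\<^sub>R w) $ j"
    using span_gens_nth[OF assms] ab by (auto simp: skew_vec_nth)
qed

lemma gens_subset_int_points: "S \<subseteq> int_points"
  unfolding skew_gens_def int_points_def by (auto simp: skew_vec_nth axis_def)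

lemma gens_subset_L: "S \<subseteq> L"
  unfolding skew_lattice_def using gens_subset_int_points span_superset[of S] by blast

lemma span_L: "span L = span S"
proof
  show "span L \<subseteq> span S" unfolding skew_lattice_def by (simp add: span_minimal)
  show "span S \<subseteq> span L" using gens_subset_L by (rule span_mono)
qed

lemma L_eq_int_span: "L = int_span S"
proof
  show "int_span S \<subseteq> L"
    unfolding skew_lattice_def int_span_eq_Z_span
    using Z_span_subset_span[of S] Z.span_minimal[OF gens_subset_int_points Z_subspace_int_points] by blast
  show "L \<subseteq> int_span S"
  proof
    fix x assume "x \<in> L"
    then have x: "x \<in> span S" "\<And>j. x$j \<in> \<int>" unfolding skew_lattice_def int_points_def by auto
    have "of_int c *\<^sub>R s \<in> Z.span S" if "s \<in> S" for s c
      using that by (intro Z.span_scale Z.span_base)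
    then have "x$j *\<^sub>R s \<in> Z.span S" if "s \<in> S" for s j
      using x(2)[of j] that by (metis Ints_cases)
    then have "(\<Sum>i\<in>I. x$i *\<^sub>R axis i 1) + x$a *\<^sub>R w \<in> Z.span S"
      by (intro Z.span_add Z.span_sum) (auto simp: skew_gens_def)
    then show "x \<in> int_span S" using span_gens_expansion[OF x(1)] by (simp add: int_span_eq_Z_span)
  qed
qed

lemma gens_pairwise_orthogonal: "\<forall>u\<in>S. \<forall>v\<in>S. u \<noteq> v \<longrightarrow> u \<bullet> v = 0"
  unfolding skew_gens_def using inner_skew_vec_axis by (auto simp: inner_axis_axis inner_commute)

lemma independent_gens: "independent S"
proof (rule pairwise_orthogonal_independent)
  show "pairwise real_inner_class.orthogonal S"
    using gens_pairwise_orthogonal unfolding pairwise_def real_inner_class.orthogonal_def by blast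
  have "w \<noteq> 0" using skew_vec_nth[of a] by (metis zero_index zero_neq_one)
  then show "0 \<notin> S" unfolding skew_gens_def by (auto simp: axis_eq_axis)
qed

definition gens_list :: "(real^'n) list" where
  "gens_list = w # map (\<lambda>i. axis i 1) (SOME l. distinct l \<and> set l = I)"

lemma gens_list: "set gens_list = S" "distinct gens_list" "length gens_list = card I + 1"
proof -
  obtain l where l: "distinct l \<and> set l = I" using finite_distinct_list[of I] by auto
  then have l': "distinct (SOME l. distinct l \<and> set l = I) \<and> set (SOME l. distinct l \<and> set l = I) = I"
    by (rule someI)
  moreover have "w \<notin> (\<lambda>i. axis i 1) ` I"
  proof
    assume "w \<in> (\<lambda>i. axis i 1) ` I"
    then obtain i where "i \<in> I" "w = axis i 1" by auto
    then have "w $ b = 0" using ab by (auto simp: axis_def)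
    then show False using ab k by (simp add: skew_vec_nth)
  qed
  ultimately show "set gens_list = S" "distinct gens_list" "length gens_list = card I + 1"
    unfolding gens_list_def skew_gens_def
    by (auto simp: distinct_map inj_on_def axis_eq_axis distinct_card[symmetric])
qed

lemma lattice_basis_L: "lattice_basis L gens_list"
  unfolding lattice_basis_def using gens_list independent_gens L_eq_int_span by simp

lemma covol_L: "covol L = sqrt K"
proof -
  have "gram_det gens_list = (\<Prod>x\<leftarrow>gens_list. x \<bullet> x)"
    using gens_list gens_pairwise_orthogonal by (intro gram_det_pairwise_orthogonal) auto
  also have "\<dots> = K"
    unfolding gens_list_def by (simp add: inner_skew_vec_self inner_axis_axis comp_def map_replicate_const)
  finally show ?thesis using covol_eq_gram_det[OF lattice_basis_L] by simp
qed

lemma L_in_grass_points: "L \<in> grass_points (card I + 1)"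
  unfolding grass_points_def
  using length_lattice_basis[OF lattice_basis_L] gens_list(3) span_L
  by (auto simp: skew_lattice_def)

lemma height_L_gt_1: "height L > 1"
proof -
  have "sqrt K > 1" using k by simp
  then show ?thesis unfolding height_def covol_L by (simp add: one_less_power)
qed

lemma span_gens_skew_vec_eq:
  assumes "skew_vec a b k' \<in> span S"
  shows "k' = k"
  using span_gens_nth(1)[OF assms] ab by (simp add: skew_vec_def axis_def)

lemma axis_in_L: "i \<in> I \<Longrightarrow> axis i 1 \<in> L"
  using gens_subset_L by (auto simp: skew_gens_def)

lemma skew_vec_in_L: "w \<in> L"
  using gens_subset_L by (auto simp: skew_gens_def)

lemma gens_subset_dual_lattice: "S \<subseteq> dual_lattice L"
  unfolding dual_lattice_def span_L using gens_subset_int_points span_superset[of S]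
  by (auto simp: skew_lattice_def intro: inner_int_points)

lemma dual_lattice_nth_Ints: "d \<in> dual_lattice L \<Longrightarrow> i \<in> I \<Longrightarrow> d$i \<in> \<int>"
  using axis_in_L unfolding dual_lattice_def by (force simp: inner_axis)

lemma dual_lattice_denominator:
  assumes d: "d \<in> dual_lattice L"
  shows "K * d$j \<in> \<int>"
proof -
  have ds: "d \<in> span S" using d unfolding dual_lattice_def span_L by auto
  have "d \<bullet> w \<in> \<int>" using d skew_vec_in_L unfolding dual_lattice_def by blast
  then have da: "K * d$a \<in> \<int>"
    using span_gens_nth(1)[OF ds] by (simp add: inner_skew_vec algebra_simps power2_eq_square)
  consider "j \<in> I" | "j = a" | "j = b" | "j \<notin> I" "j \<noteq> a" "j \<noteq> b" by blast
  then show ?thesis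
  proof cases
    case 1 then show ?thesis using dual_lattice_nth_Ints[OF d] K_Ints by (simp add: Ints_mult)
  next
    case 2 then show ?thesis using da by simp
  next
    case 3
    have "K * d$b = real k * (K * d$a)" using span_gens_nth(1)[OF ds] by simp
    then show ?thesis using 3 da by (metis Ints_mult Ints_of_nat)
  next
    case 4 then show ?thesis using span_gens_nth(2)[OF ds] by simp
  qed
qed

definition proj_L :: "real^'n \<Rightarrow> real^'n" where
  "proj_L z = z - (\<Sum>i\<in>I. z$i *\<^sub>R axis i 1) - ((z \<bullet> w) / K) *\<^sub>R w"

lemma proj_L_nth: "proj_L z $ j = z$j - (if j \<in> I then z$j else 0) - ((z \<bullet> w) / K) * w$j"
  unfolding proj_L_def by (simp only: vector_minus_component vector_scaleR_component sum_axis_nth) simp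

lemma perp_proj_span_L: "perp_proj (span L) z = proj_L z"
  unfolding span_L
proof (rule perp_proj_unique)
  have "z - proj_L z = (\<Sum>i\<in>I. z$i *\<^sub>R axis i 1) + ((z \<bullet> w) / K) *\<^sub>R w" unfolding proj_L_def by simp
  also have "\<dots> \<in> span S"
    by (intro span_add span_sum span_scale span_base) (auto simp: skew_gens_def)
  finally show "z - proj_L z \<in> span S" .
  have "span S \<subseteq> {v. v \<bullet> proj_L z = 0}"
  proof (rule span_minimal)
    show "subspace {v. v \<bullet> proj_L z = 0}" by (auto simp: subspace_def inner_add_left)
    have K0: "K \<noteq> 0" by (smt (verit) zero_le_power2)
    have "(\<Sum>i\<in>I. z$i * (w \<bullet> axis i 1)) = 0" by (rule sum.neutral) (simp add: inner_skew_vec_axis)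
    then have "w \<bullet> proj_L z = 0"
      using K0 by (simp add: proj_L_def inner_diff_right inner_sum_right inner_skew_vec_self inner_commute)
    moreover have "axis i 1 \<bullet> proj_L z = 0" if "i \<in> I" for i
      using that ab by (simp add: inner_axis' inner_commute proj_L_nth skew_vec_nth) (metis)
    ultimately show "S \<subseteq> {v. v \<bullet> proj_L z = 0}" by (auto simp: skew_gens_def)
  qed
  then show "\<forall>v\<in>span S. v \<bullet> proj_L z = 0" by blast
qed simp

lemma factor_lattice_eq: "factor_lattice L = proj_L ` int_points"
  unfolding factor_lattice_def perp_proj_span_L ..

lemma factor_lattice_denominator: "y \<in> factor_lattice L \<Longrightarrow> K * y$j \<in> \<int>"
proof -
  assume "y \<in> factor_lattice L"
  then obtain z where z: "z \<in> int_points" "y = proj_L z" unfolding factor_lattice_eq by auto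
  have zw: "z \<bullet> w \<in> \<int>"
    using gens_subset_int_points z(1) by (intro inner_int_points) (auto simp: skew_gens_def)
  have K0: "K \<noteq> 0" by (smt (verit) zero_le_power2)
  have "K * y$j = K * z$j - K * (if j \<in> I then z$j else 0) - (z \<bullet> w) * w$j"
    unfolding z(2) proj_L_nth using K0 by (simp add: right_diff_distrib)
  also have "\<dots> \<in> \<int>"
    using z(1) zw K_Ints by (auto simp: int_points_def skew_vec_nth intro!: Ints_diff Ints_mult)
  finally show ?thesis .
qed

lemma factor_lattice_nth_j0: "y \<in> factor_lattice L \<Longrightarrow> y$j0 \<in> \<int>"
  using j0 by (auto simp: factor_lattice_eq proj_L_nth skew_vec_nth int_points_def)

lemma axis_j0_in_factor_lattice: "axis j0 1 \<in> factor_lattice L"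
proof -
  have "(\<Sum>i\<in>I. axis j0 (1::real) $ i *\<^sub>R axis i 1) = 0"
    by (rule sum.neutral) (use j0 in \<open>auto simp: axis_def\<close>)
  moreover have "axis j0 1 \<bullet> w = 0" using j0 by (simp add: inner_skew_vec axis_def)
  ultimately have "proj_L (axis j0 1) = axis j0 1" unfolding proj_L_def by simp
  moreover have "axis j0 1 \<in> int_points" by (simp add: int_points_def axis_def)
  ultimately show ?thesis unfolding factor_lattice_eq by (metis image_eqI)
qed

abbreviation "PL \<equiv> perp_proj (span L)"

lemma factor_lattice_subset_span: "factor_lattice L \<subseteq> span (range (\<lambda>p. PL (axis p 1)))"
proof
  fix y assume "y \<in> factor_lattice L"
  then obtain z where z: "y = PL z" unfolding factor_lattice_def by auto
  have "PL z = PL (\<Sum>p\<in>UNIV. z$p *\<^sub>R axis p 1)" using vec_eq_sum_axis[of z] by simp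
  also have "\<dots> = (\<Sum>p\<in>UNIV. z$p *\<^sub>R PL (axis p 1))"
    using linear_perp_proj[of "span L"] by (simp add: linear_sum linear_scale)
  also have "\<dots> \<in> span (range (\<lambda>p. PL (axis p 1)))"
    by (intro span_sum span_scale span_base) auto
  finally show "y \<in> span (range (\<lambda>p. PL (axis p 1)))" using z by simp
qed

lemma perp_proj_axis_in_factor_lattice: "PL (axis p 1) \<in> factor_lattice L"
  unfolding factor_lattice_def by (rule imageI) (simp add: int_points_def axis_def)

abbreviation "tangent_gens \<equiv> {tensor_vec x y | x y. x \<in> dual_lattice L \<and> y \<in> factor_lattice L}"

abbreviation "T \<equiv> tangent_lattice L"

lemma tangent_lattice_eq_Z_span: "T = Z.span tangent_gens"
  unfolding tangent_lattice_def int_span_eq_Z_span ..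

lemma tangent_lattice_subset:
  assumes "Z.subspace V" and "\<And>x y. x \<in> dual_lattice L \<Longrightarrow> y \<in> factor_lattice L \<Longrightarrow> tensor_vec x y \<in> V"
  shows "T \<subseteq> V"
  unfolding tangent_lattice_eq_Z_span using assms by (intro Z.span_minimal) auto

lemma tangent_lattice_denominator: "t \<in> T \<Longrightarrow> of_int (int ((1 + k\<^sup>2)\<^sup>2)) * t$p \<in> \<int>"
proof -
  have "T \<subseteq> {t. K * K * t$p \<in> \<int>}"
  proof (rule tangent_lattice_subset)
    show "Z.subspace {t::real^('n \<times> 'n). K * K * t$p \<in> \<int>}"
      by (rule Z_subspace_linear_preimage_Ints) (auto intro: linearI simp: algebra_simps)
    fix x y assume "x \<in> dual_lattice L" "y \<in> factor_lattice L"
    then have "(K * x$fst p) * (K * y$snd p) \<in> \<int>"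
      using dual_lattice_denominator factor_lattice_denominator by (blast intro: Ints_mult)
    then show "tensor_vec x y \<in> {t. K * K * t$p \<in> \<int>}" by (simp add: tensor_vec_nth ac_simps)
  qed
  moreover have "real_of_int (int ((1 + k\<^sup>2)\<^sup>2)) = K * K" by (simp add: power2_eq_square algebra_simps)
  ultimately show "t \<in> T \<Longrightarrow> of_int (int ((1 + k\<^sup>2)\<^sup>2)) * t$p \<in> \<int>" by auto
qed

abbreviation "u \<equiv> tensor_vec (axis i0 1) (axis j0 1 :: real^'n)"

lemma unit_tensor_in_tangent_lattice: "u \<in> T"
  using gens_subset_dual_lattice i0 axis_j0_in_factor_lattice
  unfolding tangent_lattice_eq_Z_span by (intro Z.span_base) (auto simp: skew_gens_def)

lemma inner_unit_tensor_self: "u \<bullet> u = 1"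
  by (simp add: inner_tensor_vec inner_axis_axis)

lemma inner_tangent_lattice_unit_tensor: "t \<in> T \<Longrightarrow> t \<bullet> u \<in> \<int>"
proof -
  have "T \<subseteq> {t. t \<bullet> u \<in> \<int>}"
  proof (rule tangent_lattice_subset)
    show "Z.subspace {t::real^('n \<times> 'n). t \<bullet> u \<in> \<int>}"
      by (rule Z_subspace_linear_preimage_Ints) (auto intro: linearI simp: inner_add_left)
    fix x y assume "x \<in> dual_lattice L" "y \<in> factor_lattice L"
    then show "tensor_vec x y \<in> {t. t \<bullet> u \<in> \<int>}"
      using dual_lattice_nth_Ints[OF _ i0] factor_lattice_nth_j0
      by (simp add: inner_tensor_vec inner_axis Ints_mult)
  qed
  then show "t \<in> T \<Longrightarrow> t \<bullet> u \<in> \<int>" by blast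
qed

abbreviation "short_gens \<equiv> {tensor_vec x y | x y. x \<in> S \<and> y \<in> range (\<lambda>p. PL (axis p 1))}"

lemma short_gens_subset_tangent_lattice: "short_gens \<subseteq> T"
proof
  fix t assume "t \<in> short_gens"
  then have "t \<in> tangent_gens"
    using gens_subset_dual_lattice perp_proj_axis_in_factor_lattice by blast
  then show "t \<in> T" unfolding tangent_lattice_eq_Z_span by (rule Z.span_base)
qed

lemma tangent_lattice_subset_span_short_gens: "T \<subseteq> span short_gens"
proof -
  have "tangent_gens \<subseteq> span short_gens"
  proof
    fix t assume "t \<in> tangent_gens"
    then obtain x y where t: "t = tensor_vec x y" "x \<in> dual_lattice L" "y \<in> factor_lattice L" by blast
    have "x \<in> span S" using t(2) unfolding dual_lattice_def span_L by auto
    moreover have "y \<in> span (range (\<lambda>p. PL (axis p 1)))" using t(3) factor_lattice_subset_span by blast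
    ultimately show "t \<in> span short_gens" using tensor_vec_in_span t(1) by blast
  qed
  then show ?thesis
    unfolding tangent_lattice_eq_Z_span using Z_span_subset_span span_minimal[of tangent_gens] by blast
qed

lemma norm_short_gens_le: "t \<in> short_gens \<Longrightarrow> norm t \<le> K"
proof -
  assume "t \<in> short_gens"
  then obtain x p where t: "t = tensor_vec x (PL (axis p 1))" "x \<in> S" by blast
  have "norm w = sqrt K" unfolding norm_eq_sqrt_inner inner_skew_vec_self ..
  also have "\<dots> \<le> sqrt (K\<^sup>2)"
    using mult_left_mono[of 1 K K] by (intro real_sqrt_le_mono) (simp add: power2_eq_square)
  also have "\<dots> = K" by simp
  finally have "norm x \<le> K" using t(2) by (auto simp: skew_gens_def)
  moreover have "norm (PL (axis p 1)) \<le> 1" using norm_perp_proj_le[of "span L" "axis p 1"] by simp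
  ultimately show "norm t \<le> K" unfolding t(1) norm_tensor_vec
    using mult_mono[of "norm x" K "norm (PL (axis p 1))" 1] by simp
qed

lemma freeness_L: "freeness L = 0"
proof -
  have "Z.subspace T" unfolding tangent_lattice_eq_Z_span by simp
  then have "min_slope T \<le> 0"
    by (rule min_slope_nonpos[OF _ unit_tensor_in_tangent_lattice inner_unit_tensor_self
          inner_tangent_lattice_unit_tensor _ tangent_lattice_denominator
          short_gens_subset_tangent_lattice tangent_lattice_subset_span_short_gens
          norm_short_gens_le]) (use add_pos_nonneg[of 1 "(int k)\<^sup>2"] in simp_all)
  then show ?thesis unfolding freeness_def Let_def by (simp add: mult_nonneg_nonpos)
qed

end

lemma skew_lattice_indices_exists:
  assumes "1 < m" and "m < CARD('n) - 1"
  obtains I :: "'n::finite set" and a b i0 j0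
  where "card I + 1 = m" and "\<And>k. k \<ge> 1 \<Longrightarrow> skew_lattice_indices I a b i0 j0 k"
proof -
  obtain h :: "nat \<Rightarrow> 'n" where h: "bij_betw h {0..<CARD('n)} UNIV"
    using ex_bij_betw_nat_finite[of "UNIV :: 'n set"] by auto
  have heq: "h x = h y \<longleftrightarrow> x = y" if "x < CARD('n)" "y < CARD('n)" for x y
    using h that by (auto simp: bij_betw_def inj_on_def)
  have "{1..<m} \<subseteq> {0..<CARD('n)}" using assms by auto
  then have "inj_on h {1..<m}" using h by (auto simp: bij_betw_def intro: inj_on_subset)
  then have "card (h ` {1..<m}) + 1 = m" using assms by (simp add: card_image)
  moreover have "skew_lattice_indices (h ` {1..<m}) (h 0) (h m) (h 1) (h (m + 1)) k" if "k \<ge> 1" for k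
    using assms heq that by unfold_locales auto
  ultimately show ?thesis using that by blast
qed

lemma inj_on_skew_lattice:
  assumes indices: "\<And>k. k \<ge> 1 \<Longrightarrow> skew_lattice_indices I a b i0 j0 k"
  shows "inj_on (skew_lattice I a b) {1..}"
proof (rule inj_onI)
  fix k k' :: nat assume "k \<in> {1..}" "k' \<in> {1..}" "skew_lattice I a b k = skew_lattice I a b k'"
  then show "k = k'"
    using skew_lattice_indices.skew_vec_in_L[OF indices, of k]
      skew_lattice_indices.span_gens_skew_vec_eq[OF indices, of k' k]
    by (auto simp: skew_lattice_def)
qed

theorem theorem1p1:
  fixes m :: nat
  assumes "1 < m" and "m < CARD('n) - 1"
  shows "infinite {\<Lambda> \<in> (grass_points m :: (real^'n) set set). height \<Lambda> > 1 \<and> freeness \<Lambda> = 0}"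
proof -
  obtain I :: "'n set" and a b i0 j0
    where m: "card I + 1 = m" and indices: "\<And>k. k \<ge> 1 \<Longrightarrow> skew_lattice_indices I a b i0 j0 k"
    using skew_lattice_indices_exists[OF assms] by blast
  have "infinite (skew_lattice I a b ` {1..})"
    using inj_on_skew_lattice[OF indices] finite_imageD infinite_Ici by blast
  moreover have "skew_lattice I a b ` {1..} \<subseteq> {\<Lambda> \<in> grass_points m. height \<Lambda> > 1 \<and> freeness \<Lambda> = 0}"
    using skew_lattice_indices.L_in_grass_points[OF indices] skew_lattice_indices.height_L_gt_1[OF indices]
      skew_lattice_indices.freeness_L[OF indices] m by auto
  ultimately show ?thesis by (rule infinite_super[rotated])
qed

end
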